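(* Let $\Lambda\subseteq\Sigma_A$ and $\Gamma\subseteq\Sigma_B$ be shift spaces with $\mathcal O\in\Lambda$, and let $\Phi:\Lambda\to\Gamma$ be a sliding block code. Then $\Phi(\mathcal O)$ is a constant sequence, that is, either $\Phi(\mathcal O)=\mathcal O$ or $\Phi(\mathcal O)=(ddd\dots)$ for some $d\in L_\Gamma$.
   Context: $A,B$ are countable discrete alphabets; $\varepsilon$ is the empty letter. $\Sigma_A$ consists of $A^{\mathbb N}$ together with (when $A$ is infinite) the finite sequences in $A\cup\{\varepsilon\}$ (some entry $\varepsilon$, and all entries after the first $\varepsilon$ equal $\varepsilon$), including the empty sequence $\mathcal O=(\varepsilon\varepsilon\dots)$; its topology is generated by the generalized cylinders $Z(x,F)=\{y: y_i=x_i\ (i\le l(x)),\ y_{l(x)+1}\notin F\}$ ($x$ finite of length $l(x)$, $F\subset A$ finite). The shift is $\sigma((x_i)_i)=(x_{i+1})_i$, so $\sigma(\mathcal O)=\mathcal O$. $L_\Gamma$ is the set of letters of $B$ occurring in elements of $\Gamma$. A shift space is a closed, $\sigma$-invariant $\Lambda\subseteq\Sigma_A$ with the infinite extension property ($\mathcal O\in\Lambda$ iff infinitely many letters occur in $\Lambda$; a finite $x\neq\mathcal O$ is in $\Lambda$ iff infinitely many letters $b$ are such that $xb$ occurs as a word in some element of $\Lambda$). $B(\Sigma_A)$ denotes the set of finite words occurring in elements of $\Sigma_A$. A set $C\subseteq\Lambda$ is finitely defined in $\Lambda$ if there exist $I,J\subseteq\mathbb N$, integers $\ell_i,n_j\ge0$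 and words $b_i,d_j\in B(\Sigma_A)$ with $C=\{x\in\Lambda: (x_1\dots x_{1+\ell_i})=b_i\text{ for some } i\}$ and $\Lambda\setminus C=\{x\in\Lambda: (x_1\dots x_{1+n_j})=d_j\text{ for some } j\}$. A map $\Phi:\Lambda\to\Gamma$ is a sliding block code if there is a partition $\{C_a\}_{a\in B\cup\{\varepsilon\}}$ of $\Lambda$ into finitely defined sets with $\sigma(C_\varepsilon)\subseteq C_\varepsilon$ such that for all $x\in\Lambda$, $n\in\mathbb N$, $(\Phi(x))_n$ is the unique $a$ with $\sigma^{n-1}(x)\in C_a$. *)

theory Defs
  imports "HOL-Analysis.Analysis" "HOL-Library.Countable"
begin

text \<open>Sequences over A \<union> {\<epsilon>} are modelled as functions nat \<Rightarrow> 'a option, with None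
  the empty letter \<epsilon>; index 0 corresponds to the first coordinate x_1.\<close>

type_synonym 'a seq = "nat \<Rightarrow> 'a option"

definition Sigma_space :: "'a seq set" where
  "Sigma_space =
     (if finite (UNIV :: 'a set) then {x. \<forall>i. x i \<noteq> None}
      else {x. \<forall>i j. i \<le> j \<longrightarrow> x i = None \<longrightarrow> x j = None})"

definition empty_seq :: "'a seq" where
  "empty_seq = (\<lambda>_. None)"

definition shift :: "'a seq \<Rightarrow> 'a seq" where
  "shift x = (\<lambda>i. x (Suc i))"

definition seq_of_word :: "'a list \<Rightarrow> 'a seq" where
  "seq_of_word w = (\<lambda>i. if i < length w then Some (w ! i) else None)"

text \<open>Generalized cylinder Z(x,F), x the finite sequence with letters w (l(x) = length w).\<close>
definition gen_cylinder :: "'a list \<Rightarrow> 'a set \<Rightarrow> 'a seq set" where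
  "gen_cylinder w F = {y \<in> Sigma_space. (\<forall>i < length w. y i = Some (w ! i)) \<and>
                                         y (length w) \<notin> Some ` F}"

definition Sigma_topology :: "'a seq topology" where
  "Sigma_topology = subtopology
     (topology_generated_by {gen_cylinder w F | w F. finite F}) Sigma_space"

definition letters_of :: "'a seq set \<Rightarrow> 'a set" where
  "letters_of \<Lambda> = {a. \<exists>y\<in>\<Lambda>. \<exists>i. y i = Some a}"

definition occurs_in :: "'c list \<Rightarrow> (nat \<Rightarrow> 'c) \<Rightarrow> bool" where
  "occurs_in w y \<longleftrightarrow> (\<exists>k. \<forall>i < length w. y (k + i) = w ! i)"

definition infinite_extension_property :: "'a seq set \<Rightarrow> bool" where
  "infinite_extension_property \<Lambda> \<longleftrightarrow>
     (empty_seq \<in> \<Lambda> \<longleftrightarrow> infinite (letters_of \<Lambda>)) \<and>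
     (\<forall>w. w \<noteq> [] \<longrightarrow>
        (seq_of_word w \<in> \<Lambda> \<longleftrightarrow>
           infinite {b. \<exists>y\<in>\<Lambda>. occurs_in (map Some (w @ [b])) y}))"

definition shift_space :: "'a seq set \<Rightarrow> bool" where
  "shift_space \<Lambda> \<longleftrightarrow> \<Lambda> \<subseteq> Sigma_space \<and> closedin Sigma_topology \<Lambda> \<and>
     shift ` \<Lambda> \<subseteq> \<Lambda> \<and> infinite_extension_property \<Lambda>"

definition blocks_Sigma :: "'a option list set" where
  "blocks_Sigma = {w. \<exists>y\<in>Sigma_space. occurs_in w y}"

definition prefix_seq :: "'a seq \<Rightarrow> nat \<Rightarrow> 'a option list" where
  "prefix_seq x n = map x [0..<n]"

definition finitely_defined :: "'a seq set \<Rightarrow> 'a seq set \<Rightarrow> bool" where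
  "finitely_defined \<Lambda> C \<longleftrightarrow> C \<subseteq> \<Lambda> \<and>
     (\<exists>(I::nat set) (J::nat set) (l::nat \<Rightarrow> nat) (n::nat \<Rightarrow> nat)
        (b::nat \<Rightarrow> 'a option list) (d::nat \<Rightarrow> 'a option list).
        (\<forall>i\<in>I. b i \<in> blocks_Sigma) \<and> (\<forall>j\<in>J. d j \<in> blocks_Sigma) \<and>
        C = {x \<in> \<Lambda>. \<exists>i\<in>I. prefix_seq x (Suc (l i)) = b i} \<and>
        \<Lambda> - C = {x \<in> \<Lambda>. \<exists>j\<in>J. prefix_seq x (Suc (n j)) = d j})"

definition sliding_block_code ::
  "'a seq set \<Rightarrow> 'b seq set \<Rightarrow> ('a seq \<Rightarrow> 'b seq) \<Rightarrow> bool" where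
  "sliding_block_code \<Lambda> \<Gamma> \<Phi> \<longleftrightarrow> \<Phi> ` \<Lambda> \<subseteq> \<Gamma> \<and>
     (\<exists>C :: 'b option \<Rightarrow> 'a seq set.
        (\<forall>a. finitely_defined \<Lambda> (C a)) \<and>
        (\<forall>a a'. a \<noteq> a' \<longrightarrow> C a \<inter> C a' = {}) \<and>
        (\<Union>a. C a) = \<Lambda> \<and>
        shift ` C None \<subseteq> C None \<and>
        (\<forall>x\<in>\<Lambda>. \<forall>n. \<Phi> x n = (THE a. (shift ^^ n) x \<in> C a)))"

end

theory Submission
  imports Defs
begin

text \<open>The empty sequence is a fixed point of the shift, and the letter \<open>\<Phi> x n\<close> of a sliding
  block code only depends on the shifted point \<open>\<sigma>\<^sup>n x\<close>; hence \<open>\<Phi>\<close> is constant on the orbit of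
  any fixed point, and in particular \<open>\<Phi> \<O>\<close> is a constant sequence.\<close>

lemma shift_empty_seq: "shift empty_seq = empty_seq"
  by (simp add: shift_def empty_seq_def)

lemma funpow_shift_fixpoint: "shift x = x \<Longrightarrow> (shift ^^ n) x = x"
  by (induction n) simp_all

lemma sliding_block_code_fixpoint_constant:
  assumes "sliding_block_code \<Lambda> \<Gamma> \<Phi>" and "x \<in> \<Lambda>" and "shift x = x"
  shows "\<exists>a. \<Phi> x = (\<lambda>_. a)"
proof -
  obtain C :: "'b option \<Rightarrow> 'a seq set" where
    disjoint: "\<forall>a a'. a \<noteq> a' \<longrightarrow> C a \<inter> C a' = {}" and cover: "(\<Union>a. C a) = \<Lambda>"
    and letters: "\<forall>x\<in>\<Lambda>. \<forall>n. \<Phi> x n = (THE a. (shift ^^ n) x \<in> C a)"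
    using assms(1) unfolding sliding_block_code_def by blast
  obtain a where "x \<in> C a"
    using cover assms(2) by blast
  then have "(THE a. x \<in> C a) = a"
    using disjoint by (intro the_equality) auto
  then have "\<Phi> x = (\<lambda>_. a)"
    using letters assms(2,3) by (auto simp: funpow_shift_fixpoint)
  then show ?thesis ..
qed

lemma letters_of_constant_seq: "(\<lambda>_. Some d) \<in> \<Gamma> \<Longrightarrow> d \<in> letters_of \<Gamma>"
  unfolding letters_of_def by force

theorem mainTheorem5:
  fixes \<Lambda> :: "('a::countable) seq set" and \<Gamma> :: "('b::countable) seq set"
    and \<Phi> :: "'a seq \<Rightarrow> 'b seq"
  assumes "shift_space \<Lambda>" and "shift_space \<Gamma>"
    and "empty_seq \<in> \<Lambda>"
    and "sliding_block_code \<Lambda> \<Gamma> \<Phi>"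
  shows "\<Phi> empty_seq = empty_seq \<or> (\<exists>d \<in> letters_of \<Gamma>. \<Phi> empty_seq = (\<lambda>_. Some d))"
proof -
  obtain a where const: "\<Phi> empty_seq = (\<lambda>_. a)"
    using sliding_block_code_fixpoint_constant[OF assms(4,3) shift_empty_seq] by blast
  have "\<Phi> empty_seq \<in> \<Gamma>"
    using assms(3,4) unfolding sliding_block_code_def by blast
  show ?thesis
  proof (cases a)
    case None
    then show ?thesis using const by (simp add: empty_seq_def)
  next
    case (Some d)
    then have "d \<in> letters_of \<Gamma>"
      using const \<open>\<Phi> empty_seq \<in> \<Gamma>\<close> by (simp add: letters_of_constant_seq)
    then show ?thesis
      using const Some by blast
  qed
qed

end
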